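(* Let $G$ be a finite group, $H\le G$, $g\in G$, and $C=H\cap H^g$. Then $\langle H,\psi_{g^{-1},H}(H)\rangle\cong I(\mathbb{Z}[H/C])\rtimes H$ (inside $\mathcal{U}(\mathbb{Z}G)$), where $h\in H$ acts on $I(\mathbb{Z}[H/C])$ by left multiplication by $h^{-1}$. In particular, the normal subgroup generated by the units $1+(1-h)g^{-1}\widetilde{H}$, $h\in H$, is free abelian of rank $[H:C]-1$.
   Context: $\widetilde{H}=\sum_{h\in H}h$; $\psi_{g^{-1},H}:H\to\mathcal{U}(\mathbb{Z}G)$, $h\mapsto h+(1-h)g^{-1}\widetilde{H}$. $H^g=g^{-1}Hg$. $I(\mathbb{Z}[H/C])$ is the kernel of the $\mathbb{Z}H$-module map $\mathbb{Z}[H/C]\to\mathbb{Z}$, $hC\mapsto1$. *)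

theory Defs
  imports "HOL-Algebra.Algebra" "HOL-Algebra.Free_Abelian_Groups"
begin

definition grp_ring :: "('a, 'b) monoid_scheme \<Rightarrow> ('a \<Rightarrow> int) set" where
  "grp_ring G = {x. \<forall>z. z \<notin> carrier G \<longrightarrow> x z = 0}"

definition gr_add :: "('a \<Rightarrow> int) \<Rightarrow> ('a \<Rightarrow> int) \<Rightarrow> ('a \<Rightarrow> int)" where
  "gr_add x y = (\<lambda>z. x z + y z)"

definition gr_diff :: "('a \<Rightarrow> int) \<Rightarrow> ('a \<Rightarrow> int) \<Rightarrow> ('a \<Rightarrow> int)" where
  "gr_diff x y = (\<lambda>z. x z - y z)"

definition gr_mult :: "('a, 'b) monoid_scheme \<Rightarrow> ('a \<Rightarrow> int) \<Rightarrow> ('a \<Rightarrow> int) \<Rightarrow> ('a \<Rightarrow> int)" where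
  "gr_mult G x y = (\<lambda>z. if z \<in> carrier G
      then (\<Sum>u\<in>carrier G. x u * y (inv\<^bsub>G\<^esub> u \<otimes>\<^bsub>G\<^esub> z)) else 0)"

definition gr_basis :: "('a, 'b) monoid_scheme \<Rightarrow> 'a \<Rightarrow> ('a \<Rightarrow> int)" where
  "gr_basis G a = (\<lambda>z. if z \<in> carrier G \<and> z = a then 1 else 0)"

definition gr_one :: "('a, 'b) monoid_scheme \<Rightarrow> ('a \<Rightarrow> int)" where
  "gr_one G = gr_basis G \<one>\<^bsub>G\<^esub>"

text \<open>The element H-tilde = sum of the elements of H.\<close>
definition gr_tilde :: "('a, 'b) monoid_scheme \<Rightarrow> 'a set \<Rightarrow> ('a \<Rightarrow> int)" where
  "gr_tilde G H = (\<lambda>z. if z \<in> carrier G \<and> z \<in> H then 1 else 0)"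

definition units_ZG :: "('a, 'b) monoid_scheme \<Rightarrow> ('a \<Rightarrow> int) monoid" where
  "units_ZG G = \<lparr>carrier = {x \<in> grp_ring G. \<exists>y\<in>grp_ring G.
        gr_mult G x y = gr_one G \<and> gr_mult G y x = gr_one G},
     monoid.mult = gr_mult G, one = gr_one G\<rparr>"

definition psi :: "('a, 'b) monoid_scheme \<Rightarrow> 'a \<Rightarrow> 'a set \<Rightarrow> 'a \<Rightarrow> ('a \<Rightarrow> int)" where
  "psi G a H h = gr_add (gr_basis G h)
      (gr_mult G (gr_mult G (gr_diff (gr_one G) (gr_basis G h)) (gr_basis G a)) (gr_tilde G H))"

definition bicyc_unit :: "('a, 'b) monoid_scheme \<Rightarrow> 'a \<Rightarrow> 'a set \<Rightarrow> 'a \<Rightarrow> ('a \<Rightarrow> int)" where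
  "bicyc_unit G a H h = gr_add (gr_one G)
      (gr_mult G (gr_mult G (gr_diff (gr_one G) (gr_basis G h)) (gr_basis G a)) (gr_tilde G H))"

definition left_cosets_in :: "('a, 'b) monoid_scheme \<Rightarrow> 'a set \<Rightarrow> 'a set \<Rightarrow> 'a set set" where
  "left_cosets_in G H C = (\<lambda>h. h <#\<^bsub>G\<^esub> C) ` H"

definition aug_ideal :: "'c set \<Rightarrow> ('c \<Rightarrow> int) monoid" where
  "aug_ideal Q = \<lparr>carrier = {f. (\<forall>q. q \<notin> Q \<longrightarrow> f q = 0) \<and> sum f Q = 0},
     monoid.mult = (\<lambda>f f'. \<lambda>q. f q + f' q), one = (\<lambda>_. 0)\<rparr>"

text \<open>Left multiplication by a group element a on Z[Q], Q a set of left cosets: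
  the linear extension of X \<mapsto> aX.\<close>
definition coset_lmult :: "('a, 'b) monoid_scheme \<Rightarrow> 'a set set \<Rightarrow> 'a \<Rightarrow> ('a set \<Rightarrow> int) \<Rightarrow> ('a set \<Rightarrow> int)" where
  "coset_lmult G Q a f = (\<lambda>D. \<Sum>B\<in>{B \<in> Q. l_coset G a B = D}. f B)"

text \<open>Semidirect product N \<rtimes> K where K acts on N by act (on the right,
  n^k = act k n): (n,k)(n',k') = (act k' n * n', k k').\<close>
definition semidirect_r :: "('n, 'x) monoid_scheme \<Rightarrow> ('k, 'y) monoid_scheme
    \<Rightarrow> ('k \<Rightarrow> 'n \<Rightarrow> 'n) \<Rightarrow> ('n \<times> 'k) monoid" where
  "semidirect_r N K act = \<lparr>carrier = carrier N \<times> carrier K,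
     monoid.mult = (\<lambda>(n, k) (n', k'). (act k' n \<otimes>\<^bsub>N\<^esub> n', k \<otimes>\<^bsub>K\<^esub> k')),
     one = (\<one>\<^bsub>N\<^esub>, \<one>\<^bsub>K\<^esub>)\<rparr>"

definition normal_closure :: "('a, 'b) monoid_scheme \<Rightarrow> 'a set \<Rightarrow> 'a set" where
  "normal_closure K S = generate K {k \<otimes>\<^bsub>K\<^esub> s \<otimes>\<^bsub>K\<^esub> inv\<^bsub>K\<^esub> k | k s. k \<in> carrier K \<and> s \<in> S}"

end

theory Submission
  imports Defs
begin

text \<open>Let \<open>I\<close> be the augmentation ideal of \<open>\<int>[H/C]\<close> and let \<open>X : \<int>[H/C] \<rightarrow> \<int>G\<close> be the
  additive map sending \<open>hC\<close> to \<open>hg\<inverse>\<Sum>H\<close>. Then \<open>X f\<close> is right \<open>H\<close>-invariant,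
  \<open>k \<cdot> X f = X (k \<cdot> f)\<close>, and \<open>X f \<cdot> X f' = 0\<close> whenever \<open>f' \<in> I\<close>. Hence
  \<open>\<Phi>(f, k) = k + X (k \<cdot> f)\<close> is an injective homomorphism from the semidirect product of \<open>I\<close> and \<open>H\<close>
  into \<open>\<U>(\<int>G)\<close>. Its image contains \<open>h = \<Phi>(0, h)\<close> and \<open>\<psi>(h) = \<Phi>(h\<inverse> \<cdot> (C - hC), h)\<close>,
  and is the group they generate, because the differences \<open>C - hC\<close> generate \<open>I\<close>. The bicyclic units are
  \<open>\<Phi>(C - hC, 1)\<close>; conjugation by \<open>\<Phi>(f, k)\<close> maps \<open>\<Phi>(f', 1)\<close> to \<open>\<Phi>(k \<cdot> f', 1)\<close>, so their
  normal closure is \<open>\<Phi>(I, 1) \<cong> I\<close>, free abelian of rank \<open>[H : C] - 1\<close>.\<close>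

text \<open>Unlike \<open>group.iso_sym\<close>, only closure of \<open>carrier G\<close> under multiplication is assumed,
  so the domain need not be known to be a group.\<close>

lemma iso_sym_closed:
  assumes "h \<in> iso G H"
    and closed: "\<And>x y. x \<in> carrier G \<Longrightarrow> y \<in> carrier G \<Longrightarrow> x \<otimes>\<^bsub>G\<^esub> y \<in> carrier G"
  shows "H \<cong> G"
proof -
  let ?h' = "inv_into (carrier G) h"
  have hom: "h \<in> hom G H" and bij: "bij_betw h (carrier G) (carrier H)"
    using assms(1) by (auto simp: iso_def)
  have bij': "bij_betw ?h' (carrier H) (carrier G)"
    using bij by (rule bij_betw_inv_into)
  have "?h' (x \<otimes>\<^bsub>H\<^esub> y) = ?h' x \<otimes>\<^bsub>G\<^esub> ?h' y" if "x \<in> carrier H" "y \<in> carrier H" for x y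
  proof (rule inv_into_f_eq)
    have "?h' x \<in> carrier G" "?h' y \<in> carrier G"
      using bij' that by (auto dest: bij_betwE)
    then show "?h' x \<otimes>\<^bsub>G\<^esub> ?h' y \<in> carrier G" "h (?h' x \<otimes>\<^bsub>G\<^esub> ?h' y) = x \<otimes>\<^bsub>H\<^esub> y"
      using closed hom bij that by (simp_all add: hom_mult bij_betw_inv_into_right)
  qed (use bij in \<open>simp add: bij_betw_def\<close>)
  then have "?h' \<in> iso H G"
    using bij' by (auto simp: iso_def hom_def dest: bij_betwE)
  then show ?thesis
    by (rule is_isoI)
qed

section \<open>The integral group ring\<close>

lemma units_ZG_mult [simp]: "x \<otimes>\<^bsub>units_ZG G\<^esub> y = gr_mult G x y"
  by (simp add: units_ZG_def)

lemma units_ZG_update_mult [simp]: "x \<otimes>\<^bsub>units_ZG G\<lparr>carrier := S\<rparr>\<^esub> y = gr_mult G x y"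
  by (simp add: units_ZG_def)

lemma units_ZG_one [simp]: "\<one>\<^bsub>units_ZG G\<^esub> = gr_one G"
  by (simp add: units_ZG_def)

lemma gr_mult_outside: "z \<notin> carrier G \<Longrightarrow> gr_mult G x y z = 0"
  by (simp add: gr_mult_def)

lemma gr_mult_apply:
  "z \<in> carrier G \<Longrightarrow> gr_mult G x y z = (\<Sum>u\<in>carrier G. x u * y (inv\<^bsub>G\<^esub> u \<otimes>\<^bsub>G\<^esub> z))"
  by (simp add: gr_mult_def)

lemma gr_mult_in_grp_ring: "gr_mult G x y \<in> grp_ring G"
  by (simp add: grp_ring_def gr_mult_outside)

lemma gr_basis_in_grp_ring: "gr_basis G a \<in> grp_ring G"
  by (simp add: grp_ring_def gr_basis_def)

lemma gr_add_in_grp_ring: "x \<in> grp_ring G \<Longrightarrow> y \<in> grp_ring G \<Longrightarrow> gr_add x y \<in> grp_ring G"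
  by (simp add: grp_ring_def gr_add_def)

lemma gr_mult_add_left: "gr_mult G (gr_add x y) w = gr_add (gr_mult G x w) (gr_mult G y w)"
  by (rule ext) (simp add: gr_add_def gr_mult_def distrib_right sum.distrib)

lemma gr_mult_add_right: "gr_mult G w (gr_add x y) = gr_add (gr_mult G w x) (gr_mult G w y)"
  by (rule ext) (simp add: gr_add_def gr_mult_def distrib_left sum.distrib)

lemma gr_mult_diff_left: "gr_mult G (gr_diff x y) w = gr_diff (gr_mult G x w) (gr_mult G y w)"
  by (rule ext) (simp add: gr_diff_def gr_mult_def left_diff_distrib sum_subtractf)

context group
begin

lemma mult_inv_cancel_left: "x \<in> carrier G \<Longrightarrow> y \<in> carrier G \<Longrightarrow> x \<otimes> (inv x \<otimes> y) = y"
  by (simp add: m_assoc [symmetric])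

lemma inv_mult_cancel_left: "x \<in> carrier G \<Longrightarrow> y \<in> carrier G \<Longrightarrow> inv x \<otimes> (x \<otimes> y) = y"
  by (simp add: m_assoc [symmetric])

lemma bij_betw_mult_left: "a \<in> carrier G \<Longrightarrow> bij_betw (\<lambda>u. a \<otimes> u) (carrier G) (carrier G)"
  by (rule bij_betw_byWitness [where f' = "\<lambda>u. inv a \<otimes> u"])
     (auto simp: mult_inv_cancel_left inv_mult_cancel_left)

lemma bij_betw_mult_inv: "z \<in> carrier G \<Longrightarrow> bij_betw (\<lambda>v. z \<otimes> inv v) (carrier G) (carrier G)"
  by (rule bij_betw_byWitness [where f' = "\<lambda>u. inv u \<otimes> z"])
     (auto simp: inv_mult_group m_assoc mult_inv_cancel_left)

lemma subgroup_mult_right_iff: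
  assumes "subgroup H G" "w \<in> carrier G" "k \<in> H"
  shows "w \<otimes> k \<in> H \<longleftrightarrow> w \<in> H"
proof
  assume "w \<otimes> k \<in> H"
  then have "(w \<otimes> k) \<otimes> inv k \<in> H"
    using assms by (simp add: subgroup.m_closed subgroup.m_inv_closed)
  then show "w \<in> H"
    using assms by (simp add: m_assoc subgroup.mem_carrier)
qed (use assms in \<open>simp add: subgroup.m_closed\<close>)

end

locale finite_group = group G for G (structure) +
  assumes finite_carrier: "finite (carrier G)"
begin

lemma gr_mult_basis_left:
  assumes "b \<in> carrier G" "z \<in> carrier G"
  shows "gr_mult G (gr_basis G b) y z = y (inv b \<otimes> z)"
proof -
  have "gr_mult G (gr_basis G b) y z = (\<Sum>u\<in>carrier G. if u = b then y (inv b \<otimes> z) else 0)"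
    using assms by (auto simp: gr_mult_apply gr_basis_def intro!: sum.cong)
  then show ?thesis
    using assms finite_carrier by simp
qed

lemma gr_mult_basis_right:
  assumes "b \<in> carrier G" "z \<in> carrier G"
  shows "gr_mult G y (gr_basis G b) z = y (z \<otimes> inv b)"
proof -
  have "u \<in> carrier G \<Longrightarrow> inv u \<otimes> z = b \<longleftrightarrow> u = z \<otimes> inv b" for u
    using assms by (metis inv_closed inv_inv m_closed inv_solve_left inv_solve_right)
  then have "gr_mult G y (gr_basis G b) z
      = (\<Sum>u\<in>carrier G. if u = z \<otimes> inv b then y (z \<otimes> inv b) else 0)"
    using assms by (auto simp: gr_mult_apply gr_basis_def intro!: sum.cong)
  then show ?thesis
    using assms finite_carrier by simp
qed

lemma gr_mult_assoc: "gr_mult G (gr_mult G x y) w = gr_mult G x (gr_mult G y w)"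
proof
  fix z
  show "gr_mult G (gr_mult G x y) w z = gr_mult G x (gr_mult G y w) z"
  proof (cases "z \<in> carrier G")
    case z: True
    have inner: "(\<Sum>u\<in>carrier G. y (inv v \<otimes> u) * w (inv u \<otimes> z))
        = (\<Sum>t\<in>carrier G. y t * w (inv t \<otimes> (inv v \<otimes> z)))" if v: "v \<in> carrier G" for v
    proof -
      have "inv (inv v \<otimes> u) \<otimes> (inv v \<otimes> z) = inv u \<otimes> z" if "u \<in> carrier G" for u
        using that v z by (simp add: inv_mult_group m_assoc mult_inv_cancel_left)
      then show ?thesis
        using sum.reindex_bij_betw [OF bij_betw_mult_left [of "inv v"],
            of "\<lambda>t. y t * w (inv t \<otimes> (inv v \<otimes> z))"] v
        by simp
    qed
    have "gr_mult G (gr_mult G x y) w z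
        = (\<Sum>u\<in>carrier G. \<Sum>v\<in>carrier G. x v * y (inv v \<otimes> u) * w (inv u \<otimes> z))"
      using z by (simp add: gr_mult_apply sum_distrib_right)
    also have "\<dots> = (\<Sum>v\<in>carrier G. \<Sum>u\<in>carrier G. x v * y (inv v \<otimes> u) * w (inv u \<otimes> z))"
      by (rule sum.swap)
    also have "\<dots> = (\<Sum>v\<in>carrier G. x v * (\<Sum>t\<in>carrier G. y t * w (inv t \<otimes> (inv v \<otimes> z))))"
      by (rule sum.cong [OF refl]) (simp add: inner [symmetric] sum_distrib_left mult.assoc)
    also have "\<dots> = gr_mult G x (gr_mult G y w) z"
      using z by (simp add: gr_mult_apply)
    finally show ?thesis .
  qed (simp add: gr_mult_outside)
qed

lemma gr_mult_one_left:
  assumes "x \<in> grp_ring G"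
  shows "gr_mult G (gr_one G) x = x"
proof
  fix z
  show "gr_mult G (gr_one G) x z = x z"
    using assms by (cases "z \<in> carrier G")
      (simp_all add: gr_one_def gr_mult_basis_left gr_mult_outside grp_ring_def)
qed

lemma gr_mult_one_right:
  assumes "x \<in> grp_ring G"
  shows "gr_mult G x (gr_one G) = x"
proof
  fix z
  show "gr_mult G x (gr_one G) z = x z"
    using assms by (cases "z \<in> carrier G")
      (simp_all add: gr_one_def gr_mult_basis_right gr_mult_outside grp_ring_def)
qed

lemma gr_basis_mult:
  assumes "a \<in> carrier G" "b \<in> carrier G"
  shows "gr_mult G (gr_basis G a) (gr_basis G b) = gr_basis G (a \<otimes> b)"
proof
  fix z
  have "z \<in> carrier G \<Longrightarrow> inv a \<otimes> z = b \<longleftrightarrow> z = a \<otimes> b"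
    using assms by (metis inv_solve_left)
  then show "gr_mult G (gr_basis G a) (gr_basis G b) z = gr_basis G (a \<otimes> b) z"
    using assms by (cases "z \<in> carrier G")
      (simp_all add: gr_mult_basis_left gr_mult_outside, simp_all add: gr_basis_def)
qed

lemma group_units_ZG: "group (units_ZG G)"
proof (rule groupI)
  fix x y
  assume "x \<in> carrier (units_ZG G)" "y \<in> carrier (units_ZG G)"
  then obtain x' y' where x: "x \<in> grp_ring G" "x' \<in> grp_ring G"
      "gr_mult G x x' = gr_one G" "gr_mult G x' x = gr_one G"
    and y: "y \<in> grp_ring G" "y' \<in> grp_ring G"
      "gr_mult G y y' = gr_one G" "gr_mult G y' y = gr_one G"
    by (auto simp: units_ZG_def)
  have "gr_mult G (gr_mult G x y) (gr_mult G y' x') = gr_mult G x (gr_mult G (gr_mult G y y') x')"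
    by (simp only: gr_mult_assoc)
  moreover have "gr_mult G (gr_mult G y' x') (gr_mult G x y) = gr_mult G y' (gr_mult G (gr_mult G x' x) y)"
    by (simp only: gr_mult_assoc)
  ultimately show "x \<otimes>\<^bsub>units_ZG G\<^esub> y \<in> carrier (units_ZG G)"
    using x y by (auto simp: units_ZG_def gr_mult_in_grp_ring gr_mult_one_left)
next
  have "gr_one G \<in> grp_ring G"
    by (simp add: gr_one_def gr_basis_in_grp_ring)
  then show "\<one>\<^bsub>units_ZG G\<^esub> \<in> carrier (units_ZG G)"
    by (auto simp: units_ZG_def gr_mult_one_left)
qed (auto simp: units_ZG_def gr_mult_assoc gr_mult_one_left)

end

section \<open>The augmentation ideal\<close>

lemma aug_ideal_mult: "f \<otimes>\<^bsub>aug_ideal Q\<^esub> f' = (\<lambda>q. f q + f' q)"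
  by (simp add: aug_ideal_def)

lemma aug_ideal_sum_remove:
  assumes "f \<in> carrier (aug_ideal Q)" "finite Q" "c0 \<in> Q"
  shows "f c0 = - sum f (Q - {c0})"
  using assms by (simp add: aug_ideal_def sum.remove)

lemma aug_ideal_coordinates_iso:
  fixes e :: "nat \<Rightarrow> 'a"
  assumes fin: "finite Q" and c0: "c0 \<in> Q" and e: "bij_betw e {..<n} (Q - {c0})"
  shows "(\<lambda>f. Abs_poly_mapping (\<lambda>i. if i < n then f (e i) else 0))
      \<in> iso (aug_ideal Q) (free_Abelian_group {..<n})"
    (is "?F \<in> _")
proof -
  define F' where "F' p = (\<lambda>q. if q \<in> Q - {c0} then Poly_Mapping.lookup p (inv_into {..<n} e q)
      else if q = c0 then - (\<Sum>i<n. Poly_Mapping.lookup p i) else 0)"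
    for p :: "nat \<Rightarrow>\<^sub>0 int"
  have lookup_F: "Poly_Mapping.lookup (?F f) = (\<lambda>i. if i < n then f (e i) else 0)" for f
    by (rule lookup_Abs_poly_mapping) (rule finite_subset [of _ "{..<n}"], auto)
  have sum_R: "sum f (Q - {c0}) = (\<Sum>i<n. f (e i))" for f :: "'a \<Rightarrow> int"
    using sum.reindex_bij_betw [OF e, of f] by simp
  have F'_e: "i < n \<Longrightarrow> F' p (e i) = Poly_Mapping.lookup p i" for p i
    using e by (auto simp: F'_def bij_betw_inv_into_left dest: bij_betwE)
  have F_carrier: "?F ` carrier (aug_ideal Q) \<subseteq> carrier (free_Abelian_group {..<n})"
    by (auto simp: in_keys_iff lookup_F split: if_splits)
  have "sum (F' p) Q = 0" for p
    using fin c0 sum_R [of "F' p"] by (simp add: sum.remove F'_e) (simp add: F'_def)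
  then have F'_carrier: "F' ` carrier (free_Abelian_group {..<n}) \<subseteq> carrier (aug_ideal Q)"
    using c0 by (auto simp: aug_ideal_def F'_def)
  have "F' (?F f) = f" if "f \<in> carrier (aug_ideal Q)" for f
  proof
    fix q
    have "f c0 = - (\<Sum>i<n. f (e i))"
      using aug_ideal_sum_remove [OF that fin c0] sum_R by simp
    moreover have "q \<in> Q - {c0} \<Longrightarrow> e (inv_into {..<n} e q) = q \<and> inv_into {..<n} e q < n"
      using e inv_into_into [of q e "{..<n}"] by (auto simp: bij_betw_inv_into_right bij_betw_def)
    ultimately show "F' (?F f) q = f q"
      using that by (auto simp: F'_def lookup_F aug_ideal_def)
  qed
  moreover have "?F (F' p) = p" if "p \<in> carrier (free_Abelian_group {..<n})" for p
    using that by (intro poly_mapping_eqI) (auto simp: lookup_F F'_e in_keys_iff)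
  moreover have "?F (f \<otimes>\<^bsub>aug_ideal Q\<^esub> f') = ?F f \<otimes>\<^bsub>free_Abelian_group {..<n}\<^esub> ?F f'" for f f'
    by (rule poly_mapping_eqI) (simp add: lookup_F lookup_add aug_ideal_mult)
  ultimately show ?thesis
    using F_carrier F'_carrier
    by (intro isoI) (auto simp: hom_def intro!: bij_betw_byWitness [where f' = F'])
qed

lemma aug_ideal_iso_free_Abelian_group:
  assumes "finite Q" "c0 \<in> Q"
  shows "aug_ideal Q \<cong> free_Abelian_group {..<card Q - 1}"
proof -
  obtain e where "bij_betw e {..<card Q - 1} (Q - {c0})"
    using ex_bij_betw_nat_finite [of "Q - {c0}"] assms by (auto simp: atLeast0LessThan)
  then show ?thesis
    by (rule is_isoI [OF aug_ideal_coordinates_iso [OF assms]])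
qed

lemma aug_ideal_decomposition:
  assumes "f \<in> carrier (aug_ideal Q)" "finite Q" "c0 \<in> Q"
  shows "f = (\<lambda>B. \<Sum>D\<in>Q. f D * ((if B = D then 1 else 0) - (if B = c0 then 1 else 0)))"
proof
  fix B
  have "(\<Sum>D\<in>Q. f D * ((if B = D then 1 else 0) - (if B = c0 then 1 else 0)))
      = (\<Sum>D\<in>Q. (if D = B then f D else 0) - f D * (if B = c0 then 1 else 0))"
    by (rule sum.cong) auto
  also have "\<dots> = (\<Sum>D\<in>Q. if D = B then f D else 0) - sum f Q * (if B = c0 then 1 else 0)"
    by (simp add: sum_subtractf sum_distrib_right)
  also have "\<dots> = f B"
    using assms by (simp add: aug_ideal_def)
  finally show "f B = (\<Sum>D\<in>Q. f D * ((if B = D then 1 else 0) - (if B = c0 then 1 else 0)))"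
    by simp
qed

section \<open>Cosets of \<open>C\<close> and their blocks\<close>

locale bicyclic = finite_group G + H: subgroup H G for G (structure) and H +
  fixes g
  assumes g_closed: "g \<in> carrier G"
begin

abbreviation UZG where "UZG \<equiv> units_ZG G"

definition isect where "isect = H \<inter> (inv g <# H #> g)"

definition cosets where "cosets = left_cosets_in G H isect"

abbreviation Aug where "Aug \<equiv> carrier (aug_ideal cosets)"

definition block where "block D = {z \<in> carrier G. \<exists>d\<in>D. g \<otimes> (inv d \<otimes> z) \<in> H}"

lemma Aug_iff: "f \<in> Aug \<longleftrightarrow> (\<forall>q. q \<notin> cosets \<longrightarrow> f q = 0) \<and> sum f cosets = 0"
  by (simp add: aug_ideal_def)

lemma isect_iff: "x \<in> isect \<longleftrightarrow> x \<in> H \<and> g \<otimes> x \<otimes> inv g \<in> H"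
proof
  assume "x \<in> isect"
  then obtain h where x: "x \<in> H" "h \<in> H" "x = inv g \<otimes> h \<otimes> g"
    unfolding isect_def l_coset_def r_coset_def by auto
  then have "g \<otimes> x \<otimes> inv g = h"
    using g_closed by (simp add: m_assoc mult_inv_cancel_left H.mem_carrier)
  then show "x \<in> H \<and> g \<otimes> x \<otimes> inv g \<in> H"
    using x by simp
next
  assume x: "x \<in> H \<and> g \<otimes> x \<otimes> inv g \<in> H"
  then have "x = inv g \<otimes> (g \<otimes> x \<otimes> inv g) \<otimes> g"
    using g_closed by (simp add: m_assoc inv_mult_cancel_left H.mem_carrier)
  then show "x \<in> isect"
    using x unfolding isect_def l_coset_def r_coset_def by blast
qed

lemma subgroup_isect: "subgroup isect G"
  unfolding isect_def
  by (rule subgroups_Inter_pair [OF H.subgroup_axioms subgroup_conjugation_is_surj1 [OF g_closed H.subgroup_axioms]])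

lemma isect_subset_carrier: "isect \<subseteq> carrier G"
  by (rule subgroup.subset [OF subgroup_isect])

lemma cosets_iff: "D \<in> cosets \<longleftrightarrow> (\<exists>h\<in>H. D = h <# isect)"
  unfolding cosets_def left_cosets_in_def by auto

lemma lcoset_in_cosets: "h \<in> H \<Longrightarrow> h <# isect \<in> cosets"
  unfolding cosets_iff by auto

lemma isect_in_cosets: "isect \<in> cosets"
  using lcoset_in_cosets [OF H.one_closed] lcos_mult_one [OF isect_subset_carrier] by simp

lemma finite_cosets: "finite cosets"
  unfolding cosets_def left_cosets_in_def
  using finite_subset [OF H.subset finite_carrier] by simp

lemma cosets_subset_carrier: "D \<in> cosets \<Longrightarrow> D \<subseteq> carrier G"
  unfolding cosets_iff using l_coset_subset_G [OF isect_subset_carrier] H.mem_carrier by blast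

lemma lcoset_mult_in_cosets: "k \<in> H \<Longrightarrow> D \<in> cosets \<Longrightarrow> k <# D \<in> cosets"
  unfolding cosets_iff using lcos_m_assoc [OF isect_subset_carrier] H.mem_carrier H.m_closed by metis

lemma lcoset_inv_cancel:
  assumes "k \<in> H" "D \<in> cosets"
  shows "inv k <# (k <# D) = D" "k <# (inv k <# D) = D"
  using H.mem_carrier [OF assms(1)] cosets_subset_carrier [OF assms(2)]
  by (simp_all add: lcos_m_assoc lcos_mult_one)

lemma bij_betw_lcoset_mult: "k \<in> H \<Longrightarrow> bij_betw (\<lambda>D. k <# D) cosets cosets"
  by (rule bij_betw_byWitness [where f' = "\<lambda>D. inv k <# D"])
     (auto simp: lcoset_inv_cancel lcoset_mult_in_cosets)

lemma block_lcoset_iff: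
  assumes h: "h \<in> H" and z: "z \<in> carrier G"
  shows "z \<in> block (h <# isect) \<longleftrightarrow> g \<otimes> (inv h \<otimes> z) \<in> H"
proof
  assume "z \<in> block (h <# isect)"
  then obtain c where c: "c \<in> isect" "g \<otimes> (inv (h \<otimes> c) \<otimes> z) \<in> H"
    unfolding block_def l_coset_def by auto
  have cc: "c \<in> carrier G"
    using c(1) isect_subset_carrier by auto
  have "(g \<otimes> c \<otimes> inv g) \<otimes> (g \<otimes> (inv (h \<otimes> c) \<otimes> z)) \<in> H"
    using c isect_iff H.m_closed by simp
  moreover have "(g \<otimes> c \<otimes> inv g) \<otimes> (g \<otimes> (inv (h \<otimes> c) \<otimes> z)) = g \<otimes> (inv h \<otimes> z)"
    using cc H.mem_carrier [OF h] g_closed z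
    by (simp add: m_assoc inv_mult_group mult_inv_cancel_left inv_mult_cancel_left)
  ultimately show "g \<otimes> (inv h \<otimes> z) \<in> H"
    by simp
next
  assume "g \<otimes> (inv h \<otimes> z) \<in> H"
  moreover have "h \<in> h <# isect"
    using H.mem_carrier [OF h] subgroup.one_closed [OF subgroup_isect] unfolding l_coset_def by force
  ultimately show "z \<in> block (h <# isect)"
    using z unfolding block_def by auto
qed

lemma block_disjoint:
  assumes "D \<in> cosets" "D' \<in> cosets" "z \<in> block D" "z \<in> block D'"
  shows "D = D'"
proof -
  obtain h h' where h: "h \<in> H" "h' \<in> H" and D: "D = h <# isect" "D' = h' <# isect"
    using assms(1,2) cosets_iff by auto
  have hc: "h \<in> carrier G" "h' \<in> carrier G" and zc: "z \<in> carrier G"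
    using h H.mem_carrier assms(3) block_def by auto
  have "g \<otimes> (inv h \<otimes> z) \<in> H" "g \<otimes> (inv h' \<otimes> z) \<in> H"
    using assms(3,4) block_lcoset_iff h zc D by auto
  then have "(g \<otimes> (inv h \<otimes> z)) \<otimes> inv (g \<otimes> (inv h' \<otimes> z)) \<in> H"
    by (simp add: H.m_closed H.m_inv_closed)
  moreover have "(g \<otimes> (inv h \<otimes> z)) \<otimes> inv (g \<otimes> (inv h' \<otimes> z)) = g \<otimes> (inv h \<otimes> h') \<otimes> inv g"
    using hc zc g_closed by (simp add: m_assoc inv_mult_group mult_inv_cancel_left inv_mult_cancel_left)
  ultimately have "inv h \<otimes> h' \<in> isect"
    using isect_iff h H.m_closed H.m_inv_closed by simp
  then have "h' \<in> h <# isect"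
    by (rule subgroup.lcos_module_rev [OF subgroup_isect is_group hc])
  then show ?thesis
    unfolding D by (rule l_repr_independence [OF _ hc(1) subgroup_isect])
qed

lemma block_mult_right:
  assumes "z \<in> carrier G" "k \<in> H" "D \<in> cosets"
  shows "z \<otimes> k \<in> block D \<longleftrightarrow> z \<in> block D"
proof -
  have "g \<otimes> (inv d \<otimes> (z \<otimes> k)) \<in> H \<longleftrightarrow> g \<otimes> (inv d \<otimes> z) \<in> H" if "d \<in> D" for d
    using subgroup_mult_right_iff [OF H.subgroup_axioms _ assms(2), of "g \<otimes> (inv d \<otimes> z)"]
      that cosets_subset_carrier [OF assms(3)] assms g_closed H.mem_carrier by (auto simp: m_assoc)
  then show ?thesis
    using assms H.mem_carrier unfolding block_def by auto
qed

lemma block_lcoset_mult: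
  assumes "z \<in> carrier G" "k \<in> carrier G" "D \<in> cosets"
  shows "z \<in> block (k <# D) \<longleftrightarrow> inv k \<otimes> z \<in> block D"
proof -
  have "g \<otimes> (inv (k \<otimes> d) \<otimes> z) = g \<otimes> (inv d \<otimes> (inv k \<otimes> z))" if "d \<in> D" for d
    using that assms cosets_subset_carrier [OF assms(3)] by (auto simp: m_assoc inv_mult_group)
  then show ?thesis
    using assms unfolding block_def l_coset_def by auto
qed

lemma block_nonempty:
  assumes "D \<in> cosets"
  obtains z where "z \<in> block D"
proof -
  obtain h where h: "h \<in> H" "D = h <# isect"
    using assms cosets_iff by auto
  have "g \<otimes> (inv h \<otimes> (h \<otimes> inv g)) = \<one>"
    using H.mem_carrier [OF h(1)] g_closed by (simp add: inv_mult_cancel_left)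
  then have "h \<otimes> inv g \<in> block D"
    using block_lcoset_iff [OF h(1)] h H.mem_carrier g_closed H.one_closed by simp
  then show ?thesis
    by (rule that)
qed

section \<open>The embedding of \<open>\<int>[H/C]\<close> into \<open>\<int>G\<close>\<close>

text \<open>The block of the coset \<open>hC\<close> (\<open>h \<in> H\<close>) is \<open>hg\<inverse>H\<close>, so \<open>embed\<close> sends \<open>hC\<close> to
  \<open>hg\<inverse>\<Sum>H\<close>.\<close>

definition embed :: "('a set \<Rightarrow> int) \<Rightarrow> 'a \<Rightarrow> int" where
  "embed f = (\<lambda>z. if z \<in> carrier G then (\<Sum>D\<in>cosets. f D * (if z \<in> block D then 1 else 0)) else 0)"

definition act where "act k f = coset_lmult G cosets k f"

lemma embed_outside: "z \<notin> carrier G \<Longrightarrow> embed f z = 0"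
  by (simp add: embed_def)

lemma embed_in_grp_ring: "embed f \<in> grp_ring G"
  by (simp add: grp_ring_def embed_def)

lemma embed_add: "embed (\<lambda>D. f D + f' D) = gr_add (embed f) (embed f')"
  by (rule ext) (simp add: embed_def gr_add_def distrib_right sum.distrib)

lemma embed_zero: "embed (\<lambda>_. 0) = (\<lambda>_. 0)"
  by (rule ext) (simp add: embed_def)

lemma embed_mult_right:
  assumes "z \<in> carrier G" "k \<in> H"
  shows "embed f (z \<otimes> k) = embed f z"
proof -
  have "(\<Sum>D\<in>cosets. f D * (if z \<otimes> k \<in> block D then 1 else 0))
      = (\<Sum>D\<in>cosets. f D * (if z \<in> block D then 1 else 0))"
    by (rule sum.cong [OF refl]) (simp add: block_mult_right [OF assms])
  moreover have "z \<otimes> k \<in> carrier G"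
    using assms H.mem_carrier by simp
  ultimately show ?thesis
    using assms(1) by (simp add: embed_def)
qed

lemma embed_on_block:
  assumes D: "D \<in> cosets" and z: "z \<in> block D"
  shows "embed f z = f D"
proof -
  have "f D' * (if z \<in> block D' then 1 else 0) = (if D' = D then f D else 0)" if "D' \<in> cosets" for D'
    using z by (cases "z \<in> block D'") (auto dest: block_disjoint [OF that D _ z])
  moreover have "z \<in> carrier G"
    using z block_def by auto
  ultimately have "embed f z = (\<Sum>D'\<in>cosets. if D' = D then f D else 0)"
    unfolding embed_def by (auto intro!: sum.cong)
  then show ?thesis
    using finite_cosets D by simp
qed

lemma embed_inj:
  assumes "\<forall>q. q \<notin> cosets \<longrightarrow> f q = 0" "\<forall>q. q \<notin> cosets \<longrightarrow> f' q = 0" "embed f = embed f'"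
  shows "f = f'"
proof
  fix D
  show "f D = f' D"
  proof (cases "D \<in> cosets")
    case True
    then obtain z where "z \<in> block D"
      by (rule block_nonempty)
    then show ?thesis
      using embed_on_block [OF True] assms(3) by metis
  qed (use assms in auto)
qed

lemma act_apply:
  assumes "k \<in> H"
  shows "act k f = (\<lambda>D. if D \<in> cosets then f (inv k <# D) else 0)"
proof
  fix D
  have "{B \<in> cosets. k <# B = D} = (if D \<in> cosets then {inv k <# D} else {})"
    using lcoset_inv_cancel [OF assms] lcoset_mult_in_cosets [OF H.m_inv_closed [OF assms]]
      lcoset_mult_in_cosets [OF assms] by auto
  then show "act k f D = (if D \<in> cosets then f (inv k <# D) else 0)"
    by (simp add: act_def coset_lmult_def)
qed

lemma act_sum: "k \<in> H \<Longrightarrow> sum (act k f) cosets = sum f cosets"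
  using sum.reindex_bij_betw [OF bij_betw_lcoset_mult [OF H.m_inv_closed], of k f]
  by (simp add: act_apply)

lemma act_act: "k \<in> H \<Longrightarrow> k' \<in> H \<Longrightarrow> act k (act k' f) = act (k \<otimes> k') f"
  using lcoset_mult_in_cosets [OF H.m_inv_closed] H.mem_carrier cosets_subset_carrier
  by (auto simp: act_apply H.m_closed lcos_m_assoc inv_mult_group intro!: ext)

lemma act_one: "\<forall>q. q \<notin> cosets \<longrightarrow> f q = 0 \<Longrightarrow> act \<one> f = f"
  by (rule ext) (auto simp: act_apply [OF H.one_closed] lcos_mult_one [OF cosets_subset_carrier])

lemma act_inv_act: "f \<in> Aug \<Longrightarrow> k \<in> H \<Longrightarrow> act (inv k) (act k f) = f"
  by (simp add: act_act H.m_inv_closed H.mem_carrier act_one Aug_iff)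

lemma act_add: "k \<in> H \<Longrightarrow> act k (\<lambda>D. f D + f' D) = (\<lambda>D. act k f D + act k f' D)"
  by (auto simp: act_apply intro!: ext)

lemma act_neg: "k \<in> H \<Longrightarrow> act k (\<lambda>D. - f D) = (\<lambda>D. - act k f D)"
  by (auto simp: act_apply intro!: ext)

lemma act_zero: "k \<in> H \<Longrightarrow> act k (\<lambda>D. 0) = (\<lambda>D. 0)"
  by (simp add: act_apply)

lemma act_in_Aug: "k \<in> H \<Longrightarrow> f \<in> Aug \<Longrightarrow> act k f \<in> Aug"
  by (simp add: Aug_iff act_sum, simp add: act_apply)

lemma Aug_add: "f \<in> Aug \<Longrightarrow> f' \<in> Aug \<Longrightarrow> (\<lambda>D. f D + f' D) \<in> Aug"
  by (simp add: Aug_iff sum.distrib)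

lemma Aug_neg: "f \<in> Aug \<Longrightarrow> (\<lambda>D. - f D) \<in> Aug"
  by (simp add: Aug_iff sum_negf)

lemma Aug_zero: "(\<lambda>D. 0) \<in> Aug"
  by (simp add: Aug_iff)

lemma Aug_scale: "f \<in> Aug \<Longrightarrow> (\<lambda>D. c * f D) \<in> Aug"
  by (simp add: Aug_iff sum_distrib_left [symmetric])

lemma gr_basis_mult_embed:
  assumes k: "k \<in> H"
  shows "gr_mult G (gr_basis G k) (embed f) = embed (act k f)"
proof
  fix z
  show "gr_mult G (gr_basis G k) (embed f) z = embed (act k f) z"
  proof (cases "z \<in> carrier G")
    case z: True
    have kc: "k \<in> carrier G"
      using k by (rule H.mem_carrier)
    have "gr_mult G (gr_basis G k) (embed f) z = embed f (inv k \<otimes> z)"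
      by (rule gr_mult_basis_left [OF kc z])
    also have "\<dots> = (\<Sum>D\<in>cosets. f (inv k <# (k <# D)) * (if z \<in> block (k <# D) then 1 else 0))"
      using z kc by (auto simp: embed_def block_lcoset_mult lcoset_inv_cancel [OF k] intro!: sum.cong)
    also have "\<dots> = (\<Sum>D\<in>cosets. f (inv k <# D) * (if z \<in> block D then 1 else 0))"
      by (rule sum.reindex_bij_betw [OF bij_betw_lcoset_mult [OF k],
            of "\<lambda>D. f (inv k <# D) * (if z \<in> block D then 1 else 0)"])
    also have "\<dots> = embed (act k f) z"
      using z by (simp add: embed_def act_apply [OF k])
    finally show ?thesis .
  qed (simp add: gr_mult_outside embed_outside)
qed

lemma embed_mult_gr_basis:
  assumes "k \<in> H"
  shows "gr_mult G (embed f) (gr_basis G k) = embed f"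
proof
  fix z
  show "gr_mult G (embed f) (gr_basis G k) z = embed f z"
    using assms gr_mult_basis_right [OF H.mem_carrier [OF assms]] embed_mult_right [OF _ H.m_inv_closed]
    by (cases "z \<in> carrier G") (simp_all add: gr_mult_outside embed_outside)
qed

lemma convolution_with_block_independent:
  assumes z: "z \<in> carrier G" and D: "D \<in> cosets"
  shows "(\<Sum>v\<in>carrier G. embed f (z \<otimes> inv v) * (if v \<in> block D then 1 else 0))
       = (\<Sum>v\<in>carrier G. embed f (z \<otimes> inv v) * (if v \<in> block isect then 1 else 0))"
    (is "?S D = ?S isect")
proof -
  obtain h where h: "h \<in> H" "D = h <# isect"
    using D cosets_iff by auto
  have hc: "h \<in> carrier G"
    using h(1) by (rule H.mem_carrier)
  have "?S D = (\<Sum>w\<in>carrier G. embed f (z \<otimes> inv (h \<otimes> w)) * (if h \<otimes> w \<in> block D then 1 else 0))"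
    using sum.reindex_bij_betw [OF bij_betw_mult_left [OF hc],
        of "\<lambda>v. embed f (z \<otimes> inv v) * (if v \<in> block D then 1 else 0)"] by simp
  also have "\<dots> = ?S isect"
  proof (rule sum.cong [OF refl])
    fix w
    assume w: "w \<in> carrier G"
    have "embed f (z \<otimes> inv (h \<otimes> w)) = embed f ((z \<otimes> inv w) \<otimes> inv h)"
      using z w hc by (simp add: inv_mult_group m_assoc)
    also have "\<dots> = embed f (z \<otimes> inv w)"
      using embed_mult_right [of "z \<otimes> inv w" "inv h"] z w H.m_inv_closed [OF h(1)] by simp
    finally have "embed f (z \<otimes> inv (h \<otimes> w)) = embed f (z \<otimes> inv w)" .
    moreover have "h \<otimes> w \<in> block D \<longleftrightarrow> w \<in> block isect"
      unfolding h(2) using block_lcoset_mult [OF _ hc isect_in_cosets] hc w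
      by (simp add: inv_mult_cancel_left)
    ultimately show "embed f (z \<otimes> inv (h \<otimes> w)) * (if h \<otimes> w \<in> block D then 1 else 0)
        = embed f (z \<otimes> inv w) * (if w \<in> block isect then 1 else 0)"
      by simp
  qed
  finally show ?thesis .
qed

text \<open>As \<open>embed f\<close> is right \<open>H\<close>-invariant, \<open>embed f \<cdot> hg\<inverse>\<Sum>H\<close> does not depend on \<open>h \<in> H\<close>,
  so the product is \<open>\<Sum>f'\<close> times \<open>embed f \<cdot> g\<inverse>\<Sum>H\<close>.\<close>

lemma embed_mult_embed:
  assumes "sum f' cosets = 0"
  shows "gr_mult G (embed f) (embed f') = (\<lambda>_. 0)"
proof
  fix z
  show "gr_mult G (embed f) (embed f') z = 0"
  proof (cases "z \<in> carrier G")
    case z: True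
    define S where "S D = (\<Sum>v\<in>carrier G. embed f (z \<otimes> inv v) * (if v \<in> block D then 1 else 0))" for D
    have "gr_mult G (embed f) (embed f') z = (\<Sum>u\<in>carrier G. embed f u * embed f' (inv u \<otimes> z))"
      using gr_mult_apply [OF z] .
    also have "\<dots> = (\<Sum>v\<in>carrier G. embed f (z \<otimes> inv v) * embed f' (inv (z \<otimes> inv v) \<otimes> z))"
      using sum.reindex_bij_betw [OF bij_betw_mult_inv [OF z], of "\<lambda>u. embed f u * embed f' (inv u \<otimes> z)"]
      by simp
    also have "\<dots> = (\<Sum>v\<in>carrier G. embed f (z \<otimes> inv v) * embed f' v)"
      using z by (intro sum.cong) (auto simp: inv_mult_group m_assoc inv_mult_cancel_left)
    also have "\<dots> = (\<Sum>v\<in>carrier G. \<Sum>D\<in>cosets.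
        f' D * (embed f (z \<otimes> inv v) * (if v \<in> block D then 1 else 0)))"
      by (rule sum.cong [OF refl]) (simp add: embed_def [of f'] sum_distrib_left mult_ac)
    also have "\<dots> = (\<Sum>D\<in>cosets. f' D * S D)"
      by (subst sum.swap) (simp add: S_def sum_distrib_left)
    also have "\<dots> = (\<Sum>D\<in>cosets. f' D * S isect)"
      using convolution_with_block_independent [OF z] by (simp add: S_def)
    also have "\<dots> = 0"
      using assms by (simp add: sum_distrib_right [symmetric])
    finally show ?thesis .
  qed (simp add: gr_mult_outside)
qed

section \<open>The embedding of the semidirect product\<close>

definition Phi where "Phi f k = gr_add (gr_basis G k) (embed (act k f))"

definition coset_diff where
  "coset_diff h = (\<lambda>B. (if B = isect then 1 else 0) - (if B = h <# isect then 1 else 0))"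

lemma Phi_in_grp_ring: "Phi f k \<in> grp_ring G"
  unfolding Phi_def by (rule gr_add_in_grp_ring [OF gr_basis_in_grp_ring embed_in_grp_ring])

lemma Phi_mult:
  assumes "sum f' cosets = 0" and k: "k \<in> H" and k': "k' \<in> H"
  shows "gr_mult G (Phi f k) (Phi f' k') = Phi (\<lambda>D. act (inv k') f D + f' D) (k \<otimes> k')"
proof -
  have "sum (act k' f') cosets = 0"
    using act_sum [OF k'] assms(1) by simp
  then have "gr_mult G (Phi f k) (Phi f' k')
      = gr_add (gr_add (gr_basis G (k \<otimes> k')) (embed (act k f)))
               (gr_add (embed (act (k \<otimes> k') f')) (\<lambda>_. 0))"
    unfolding Phi_def gr_mult_add_left gr_mult_add_right
    using gr_basis_mult [OF H.mem_carrier H.mem_carrier, OF k k'] gr_basis_mult_embed [OF k]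
      act_act [OF k k'] embed_mult_gr_basis [OF k'] embed_mult_embed
    by simp
  moreover have "act (k \<otimes> k') (act (inv k') f) = act k f"
    using k k' by (simp add: act_act H.m_closed H.m_inv_closed H.mem_carrier m_assoc)
  ultimately show ?thesis
    unfolding Phi_def act_add [OF H.m_closed [OF k k']] embed_add
    by (simp add: gr_add_def add.assoc)
qed

lemma Phi_zero: "k \<in> H \<Longrightarrow> Phi (\<lambda>_. 0) k = gr_basis G k"
  unfolding Phi_def by (simp add: act_zero embed_zero gr_add_def)

lemma Phi_zero_one: "Phi (\<lambda>_. 0) \<one> = gr_one G"
  using Phi_zero [OF H.one_closed] by (simp add: gr_one_def)

lemma Phi_one: "f \<in> Aug \<Longrightarrow> Phi f \<one> = gr_add (gr_one G) (embed f)"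
  unfolding Phi_def gr_one_def by (simp add: act_one Aug_iff)

lemma Phi_one_mult:
  "f \<in> Aug \<Longrightarrow> f' \<in> Aug \<Longrightarrow> gr_mult G (Phi f \<one>) (Phi f' \<one>) = Phi (\<lambda>D. f D + f' D) \<one>"
  using Phi_mult [OF _ H.one_closed H.one_closed, of f' f] by (simp add: act_one Aug_iff)

lemma Phi_inverse:
  assumes f: "f \<in> Aug" and k: "k \<in> H"
  shows "gr_mult G (Phi f k) (Phi (\<lambda>D. - act k f D) (inv k)) = gr_one G"
    and "gr_mult G (Phi (\<lambda>D. - act k f D) (inv k)) (Phi f k) = gr_one G"
proof -
  have "sum (\<lambda>D. - act k f D) cosets = 0" "sum f cosets = 0"
    using f act_sum [OF k] by (simp_all add: Aug_iff sum_negf)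
  moreover have "act (inv k) (\<lambda>D. - act k f D) = (\<lambda>D. - f D)"
    using act_neg [OF H.m_inv_closed [OF k]] act_inv_act [OF f k] by simp
  ultimately show "gr_mult G (Phi f k) (Phi (\<lambda>D. - act k f D) (inv k)) = gr_one G"
    and "gr_mult G (Phi (\<lambda>D. - act k f D) (inv k)) (Phi f k) = gr_one G"
    using Phi_mult k H.m_inv_closed [OF k] H.mem_carrier [OF k] Phi_zero_one by simp_all
qed

lemma Phi_in_units:
  assumes "f \<in> Aug" "k \<in> H"
  shows "Phi f k \<in> carrier UZG"
  using Phi_inverse [OF assms] Phi_in_grp_ring [of f k] Phi_in_grp_ring [of "\<lambda>D. - act k f D" "inv k"]
  by (auto simp: units_ZG_def)

lemma Phi_inv: "f \<in> Aug \<Longrightarrow> k \<in> H \<Longrightarrow> inv\<^bsub>UZG\<^esub> (Phi f k) = Phi (\<lambda>D. - act k f D) (inv k)"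
  using group.inv_equality [OF group_units_ZG, of "Phi (\<lambda>D. - act k f D) (inv k)" "Phi f k"]
    Phi_inverse Phi_in_units Aug_neg act_in_Aug H.m_inv_closed by simp

lemma Phi_one_inv: "f \<in> Aug \<Longrightarrow> inv\<^bsub>UZG\<^esub> (Phi f \<one>) = Phi (\<lambda>D. - f D) \<one>"
  using Phi_inv [OF _ H.one_closed, of f] by (simp add: act_one Aug_iff)

text \<open>The coefficient of \<open>k\<close> in \<open>Phi f k\<close> exceeds the one of \<open>k'\<close> by \<open>1\<close> when \<open>k \<noteq> k'\<close>,
  as \<open>embed\<close> is constant on left cosets of \<open>H\<close>; this recovers \<open>k\<close>.\<close>

lemma Phi_inj:
  assumes f: "f \<in> Aug" and f': "f' \<in> Aug" and k: "k \<in> H" and k': "k' \<in> H"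
    and eq: "Phi f k = Phi f' k'"
  shows "f = f' \<and> k = k'"
proof -
  have kc: "k \<in> carrier G" "k' \<in> carrier G"
    using k k' H.mem_carrier by auto
  define Y where "Y = embed (act k f)"
  define Y' where "Y' = embed (act k' f')"
  have ev: "gr_basis G k z + Y z = gr_basis G k' z + Y' z" for z
    using fun_cong [OF eq, of z] unfolding Phi_def Y_def Y'_def gr_add_def .
  have "Y k' = Y (k \<otimes> (inv k \<otimes> k'))" "Y' k = Y' (k' \<otimes> (inv k' \<otimes> k))"
    using kc by (simp_all add: mult_inv_cancel_left)
  then have Y_const: "Y k' = Y k" "Y' k = Y' k'"
    unfolding Y_def Y'_def
    using embed_mult_right [OF kc(1) H.m_closed [OF H.m_inv_closed [OF k] k']]
      embed_mult_right [OF kc(2) H.m_closed [OF H.m_inv_closed [OF k'] k]]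
    by simp_all
  have kk: "k = k'"
  proof (rule ccontr)
    assume "k \<noteq> k'"
    then have "1 + Y k = Y' k" "Y k' = 1 + Y' k'"
      using ev [of k] ev [of k'] kc by (simp_all add: gr_basis_def)
    then show False
      using Y_const by simp
  qed
  have "Y = Y'"
    using ev kk by (intro ext) simp
  then have "act k f = act k f'"
    using act_in_Aug [OF k f] act_in_Aug [OF k f'] kk
    by (intro embed_inj) (simp_all add: Aug_iff Y_def Y'_def)
  then have "f = f'"
    using act_inv_act [OF f k] act_inv_act [OF f' k] by metis
  then show ?thesis
    using kk by simp
qed

lemma coset_diff_in_Aug: "h \<in> H \<Longrightarrow> coset_diff h \<in> Aug"
  unfolding Aug_iff coset_diff_def
  using isect_in_cosets lcoset_in_cosets finite_cosets by (auto simp: sum_subtractf)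

lemma bicyclic_summand_eq_embed:
  assumes h: "h \<in> H"
  shows "gr_mult G (gr_mult G (gr_diff (gr_one G) (gr_basis G h)) (gr_basis G (inv g))) (gr_tilde G H)
       = embed (coset_diff h)"
    (is "?lhs = _")
proof
  fix z
  have hc: "h \<in> carrier G"
    using h by (rule H.mem_carrier)
  have "gr_mult G (gr_diff (gr_one G) (gr_basis G h)) (gr_basis G (inv g))
      = gr_diff (gr_basis G (inv g)) (gr_basis G (h \<otimes> inv g))"
    unfolding gr_mult_diff_left
    using gr_mult_one_left [OF gr_basis_in_grp_ring] gr_basis_mult [OF hc inv_closed [OF g_closed]]
    by simp
  then have lhs: "?lhs = gr_diff (gr_mult G (gr_basis G (inv g)) (gr_tilde G H))
      (gr_mult G (gr_basis G (h \<otimes> inv g)) (gr_tilde G H))"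
    by (simp add: gr_mult_diff_left)
  show "?lhs z = embed (coset_diff h) z"
  proof (cases "z \<in> carrier G")
    case z: True
    have "embed (coset_diff h) z = (\<Sum>D\<in>cosets. coset_diff h D * (if z \<in> block D then 1 else 0))"
      using z by (simp add: embed_def)
    also have "\<dots> = (\<Sum>D\<in>cosets. if D = isect then (if z \<in> block isect then 1 else 0) else 0)
        - (\<Sum>D\<in>cosets. if D = h <# isect then (if z \<in> block (h <# isect) then 1 else 0) else 0)"
      unfolding sum_subtractf [symmetric] by (rule sum.cong) (auto simp: coset_diff_def)
    also have "\<dots> = (if z \<in> block isect then 1 else 0) - (if z \<in> block (h <# isect) then 1 else 0)"
      using isect_in_cosets lcoset_in_cosets [OF h] finite_cosets by simp
    also have "\<dots> = (if g \<otimes> z \<in> H then 1 else 0) - (if g \<otimes> (inv h \<otimes> z) \<in> H then 1 else 0)"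
      using block_lcoset_iff [OF H.one_closed z] block_lcoset_iff [OF h z]
        lcos_mult_one [OF isect_subset_carrier] z by simp
    also have "\<dots> = ?lhs z"
      unfolding lhs using z hc g_closed
      by (simp add: gr_diff_def gr_mult_basis_left gr_tilde_def inv_mult_group m_assoc)
    finally show ?thesis
      by simp
  qed (simp add: gr_mult_outside embed_outside)
qed

lemma bicyc_unit_eq_Phi: "h \<in> H \<Longrightarrow> bicyc_unit G (inv g) H h = Phi (coset_diff h) \<one>"
  unfolding bicyc_unit_def by (simp add: bicyclic_summand_eq_embed Phi_one coset_diff_in_Aug)

lemma psi_eq_Phi: "h \<in> H \<Longrightarrow> psi G (inv g) H h = Phi (act (inv h) (coset_diff h)) h"
  unfolding psi_def Phi_def
  by (simp add: bicyclic_summand_eq_embed act_act H.m_inv_closed H.mem_carrier act_one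
      coset_diff_in_Aug [unfolded Aug_iff])

section \<open>The subgroup generated by \<open>H\<close> and \<open>\<psi>(H)\<close>\<close>

definition generators where "generators = gr_basis G ` H \<union> psi G (inv g) H ` H"

definition Phi_image where "Phi_image = (\<lambda>(f, k). Phi f k) ` (Aug \<times> H)"

definition semidirect where
  "semidirect = semidirect_r (aug_ideal cosets) (G\<lparr>carrier := H\<rparr>) (\<lambda>h f. coset_lmult G cosets (inv h) f)"

lemma semidirect_carrier: "carrier semidirect = Aug \<times> H"
  by (simp add: semidirect_def semidirect_r_def)

lemma semidirect_mult: "(f, k) \<otimes>\<^bsub>semidirect\<^esub> (f', k') = (\<lambda>q. act (inv k') f q + f' q, k \<otimes> k')"
  by (simp add: semidirect_def semidirect_r_def aug_ideal_def act_def)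

lemma generators_subset_Phi_image: "generators \<subseteq> Phi_image"
proof -
  have "gr_basis G h \<in> Phi_image" if h: "h \<in> H" for h
    using h Phi_zero [OF h] Aug_zero unfolding Phi_image_def
    by (intro image_eqI [where x = "(\<lambda>_. 0, h)"]) simp_all
  moreover have "psi G (inv g) H h \<in> Phi_image" if h: "h \<in> H" for h
    using h psi_eq_Phi [OF h] act_in_Aug [OF H.m_inv_closed coset_diff_in_Aug] unfolding Phi_image_def
    by (intro image_eqI [where x = "(act (inv h) (coset_diff h), h)"]) simp_all
  ultimately show ?thesis
    unfolding generators_def by blast
qed

lemma subgroup_Phi_image: "subgroup Phi_image UZG"
proof (rule group.subgroupI [OF group_units_ZG])
  show "Phi_image \<subseteq> carrier UZG"
    unfolding Phi_image_def using Phi_in_units by auto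
  show "Phi_image \<noteq> {}"
    unfolding Phi_image_def using Aug_zero H.one_closed by blast
next
  fix a
  assume "a \<in> Phi_image"
  then obtain f k where fk: "f \<in> Aug" "k \<in> H" "a = Phi f k"
    unfolding Phi_image_def by auto
  then show "inv\<^bsub>UZG\<^esub> a \<in> Phi_image"
    unfolding Phi_image_def using Phi_inv Aug_neg act_in_Aug H.m_inv_closed
    by (intro image_eqI [where x = "(\<lambda>D. - act k f D, inv k)"]) simp_all
next
  fix a b
  assume "a \<in> Phi_image" "b \<in> Phi_image"
  then obtain f k f' k' where fk: "f \<in> Aug" "k \<in> H" "a = Phi f k" "f' \<in> Aug" "k' \<in> H" "b = Phi f' k'"
    unfolding Phi_image_def by auto
  then have "a \<otimes>\<^bsub>UZG\<^esub> b = Phi (\<lambda>D. act (inv k') f D + f' D) (k \<otimes> k')"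
    using Phi_mult by (simp add: Aug_iff)
  moreover have "(\<lambda>D. act (inv k') f D + f' D) \<in> Aug"
    using fk by (simp add: Aug_add act_in_Aug H.m_inv_closed)
  ultimately show "a \<otimes>\<^bsub>UZG\<^esub> b \<in> Phi_image"
    unfolding Phi_image_def using fk H.m_closed
    by (intro image_eqI [where x = "(\<lambda>D. act (inv k') f D + f' D, k \<otimes> k')"]) simp_all
qed

lemma Phi_one_int_mult_in_subgroup:
  assumes S: "subgroup S UZG" and f: "f \<in> Aug" and in_S: "Phi f \<one> \<in> S"
  shows "Phi (\<lambda>B. c * f B) \<one> \<in> S"
proof -
  have nat_mult: "Phi (\<lambda>B. int n * f B) \<one> \<in> S" for n
  proof (induction n)
    case 0
    then show ?case
      using subgroup.one_closed [OF S] Phi_zero_one by simp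
  next
    case (Suc n)
    have "Phi (\<lambda>B. int (Suc n) * f B) \<one> = gr_mult G (Phi f \<one>) (Phi (\<lambda>B. int n * f B) \<one>)"
      using Phi_one_mult [OF f Aug_scale [OF f]] by (simp add: algebra_simps)
    then show ?case
      using subgroup.m_closed [OF S in_S Suc] by simp
  qed
  show ?thesis
  proof (cases "c \<ge> 0")
    case True
    then show ?thesis
      using nat_mult [of "nat c"] by simp
  next
    case False
    define n where "n = nat (- c)"
    then have "c = - int n"
      using False by simp
    then have "Phi (\<lambda>B. c * f B) \<one> = inv\<^bsub>UZG\<^esub> (Phi (\<lambda>B. int n * f B) \<one>)"
      by (simp add: Phi_one_inv [OF Aug_scale [OF f]])
    then show ?thesis
      using subgroup.m_inv_closed [OF S nat_mult] by simp
  qed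
qed

lemma Phi_one_sum_in_subgroup:
  assumes S: "subgroup S UZG" and "finite A"
    and u: "\<And>a. a \<in> A \<Longrightarrow> u a \<in> Aug \<and> Phi (u a) \<one> \<in> S"
  shows "(\<lambda>B. \<Sum>a\<in>A. u a B) \<in> Aug \<and> Phi (\<lambda>B. \<Sum>a\<in>A. u a B) \<one> \<in> S"
  using \<open>finite A\<close> u
proof (induction A rule: finite_induct)
  case empty
  then show ?case
    using Aug_zero subgroup.one_closed [OF S] Phi_zero_one by simp
next
  case (insert a A)
  have head: "u a \<in> Aug" "Phi (u a) \<one> \<in> S"
    using insert.prems by auto
  have tail: "(\<lambda>B. \<Sum>a\<in>A. u a B) \<in> Aug" "Phi (\<lambda>B. \<Sum>a\<in>A. u a B) \<one> \<in> S"
    using insert.IH insert.prems by auto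
  have "Phi (\<lambda>B. u a B + (\<Sum>a\<in>A. u a B)) \<one> = gr_mult G (Phi (u a) \<one>) (Phi (\<lambda>B. \<Sum>a\<in>A. u a B) \<one>)"
    using Phi_one_mult [OF head(1) tail(1)] by simp
  then show ?case
    using insert.hyps Aug_add [OF head(1) tail(1)] subgroup.m_closed [OF S head(2) tail(2)] by simp
qed

lemma Phi_one_in_subgroup:
  assumes S: "subgroup S UZG" and gens: "\<And>h. h \<in> H \<Longrightarrow> Phi (coset_diff h) \<one> \<in> S"
    and f: "f \<in> Aug"
  shows "Phi f \<one> \<in> S"
proof -
  define e where "e D = (\<lambda>B. (if B = D then 1 else 0) - (if B = isect then 1 else (0::int)))" for D
  have terms: "(\<lambda>B. f D * e D B) \<in> Aug \<and> Phi (\<lambda>B. f D * e D B) \<one> \<in> S" if D: "D \<in> cosets" for D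
  proof -
    obtain h where h: "h \<in> H" "D = h <# isect"
      using D cosets_iff by auto
    then have "(\<lambda>B. f D * e D B) = (\<lambda>B. - f D * coset_diff h B)"
      by (auto simp: e_def coset_diff_def)
    then show ?thesis
      using Phi_one_int_mult_in_subgroup [OF S coset_diff_in_Aug [OF h(1)] gens [OF h(1)], of "- f D"]
        Aug_scale [OF coset_diff_in_Aug [OF h(1)], of "- f D"] by simp
  qed
  have "Phi (\<lambda>B. \<Sum>D\<in>cosets. f D * e D B) \<one> \<in> S"
    by (rule conjunct2 [OF Phi_one_sum_in_subgroup [OF S finite_cosets terms]])
  moreover have "(\<lambda>B. \<Sum>D\<in>cosets. f D * e D B) = f"
    using aug_ideal_decomposition [OF f finite_cosets isect_in_cosets] unfolding e_def by simp
  ultimately show ?thesis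
    by simp
qed

lemma Phi_eq_Phi_one_mult_gr_basis:
  assumes "f \<in> Aug" "k \<in> H"
  shows "Phi f k = gr_mult G (Phi (act k f) \<one>) (gr_basis G k)"
  using Phi_mult [OF _ H.one_closed assms(2), of "\<lambda>_. 0" "act k f"] assms
  by (simp add: Phi_zero act_inv_act H.mem_carrier)

lemma Phi_one_eq_psi_mult_inv:
  assumes "h \<in> H"
  shows "Phi (coset_diff h) \<one> = psi G (inv g) H h \<otimes>\<^bsub>UZG\<^esub> inv\<^bsub>UZG\<^esub> (gr_basis G h)"
proof -
  have "inv\<^bsub>UZG\<^esub> (gr_basis G h) = Phi (\<lambda>_. 0) (inv h)"
    using Phi_inv [OF Aug_zero assms] Phi_zero [OF assms] act_zero [OF assms] by simp
  moreover have "act (inv (inv h)) (act (inv h) (coset_diff h)) = coset_diff h"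
    using act_inv_act [OF coset_diff_in_Aug H.m_inv_closed, OF assms assms]
    by (simp add: H.mem_carrier assms)
  ultimately show ?thesis
    using Phi_mult [OF _ assms H.m_inv_closed [OF assms], of "\<lambda>_. 0"] psi_eq_Phi [OF assms]
    by (simp add: H.mem_carrier assms)
qed

lemma generate_eq_Phi_image: "generate UZG generators = Phi_image"
proof
  show "generate UZG generators \<subseteq> Phi_image"
    by (rule group.generate_subgroup_incl [OF group_units_ZG generators_subset_Phi_image subgroup_Phi_image])
next
  have gens_units: "generators \<subseteq> carrier UZG"
    using generators_subset_Phi_image subgroup.subset [OF subgroup_Phi_image] by blast
  have "Phi (coset_diff h) \<one> \<in> generate UZG generators" if h: "h \<in> H" for h
  proof -
    have "psi G (inv g) H h \<in> generate UZG generators" "inv\<^bsub>UZG\<^esub> (gr_basis G h) \<in> generate UZG generators"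
      unfolding generators_def using h by (auto intro: generate.incl generate.inv)
    then show ?thesis
      unfolding Phi_one_eq_psi_mult_inv [OF h] by (rule generate.eng)
  qed
  then have "Phi (act k f) \<one> \<in> generate UZG generators" if "f \<in> Aug" "k \<in> H" for f k
    using Phi_one_in_subgroup [OF group.generate_is_subgroup [OF group_units_ZG gens_units]]
      act_in_Aug that by blast
  moreover have "gr_basis G k \<in> generate UZG generators" if "k \<in> H" for k
    unfolding generators_def using that by (auto intro: generate.incl)
  ultimately show "Phi_image \<subseteq> generate UZG generators"
    unfolding Phi_image_def
    using Phi_eq_Phi_one_mult_gr_basis generate.eng [of _ UZG generators] by fastforce
qed

lemma Phi_iso_semidirect: "(\<lambda>(f, k). Phi f k) \<in> iso semidirect (UZG\<lparr>carrier := Phi_image\<rparr>)"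
proof (rule isoI)
  show "(\<lambda>(f, k). Phi f k) \<in> hom semidirect (UZG\<lparr>carrier := Phi_image\<rparr>)"
  proof (rule homI)
    fix x y
    assume "x \<in> carrier semidirect" "y \<in> carrier semidirect"
    then obtain f k f' k' where "x = (f, k)" "y = (f', k')" "f \<in> Aug" "k \<in> H" "f' \<in> Aug" "k' \<in> H"
      unfolding semidirect_carrier by auto
    then show "(case x \<otimes>\<^bsub>semidirect\<^esub> y of (f, k) \<Rightarrow> Phi f k)
        = (case x of (f, k) \<Rightarrow> Phi f k) \<otimes>\<^bsub>UZG\<lparr>carrier := Phi_image\<rparr>\<^esub> (case y of (f, k) \<Rightarrow> Phi f k)"
      using Phi_mult [of f' k k' f] by (simp add: semidirect_mult units_ZG_def Aug_iff)
  qed (auto simp: semidirect_carrier Phi_image_def)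
  show "bij_betw (\<lambda>(f, k). Phi f k) (carrier semidirect) (carrier (UZG\<lparr>carrier := Phi_image\<rparr>))"
    unfolding bij_betw_def inj_on_def semidirect_carrier Phi_image_def using Phi_inj by auto
qed

lemma Phi_image_iso_semidirect: "UZG\<lparr>carrier := Phi_image\<rparr> \<cong> semidirect"
proof (rule iso_sym_closed [OF Phi_iso_semidirect])
  fix x y
  assume "x \<in> carrier semidirect" "y \<in> carrier semidirect"
  then show "x \<otimes>\<^bsub>semidirect\<^esub> y \<in> carrier semidirect"
    by (auto simp: semidirect_carrier semidirect_mult Aug_add act_in_Aug H.m_inv_closed H.m_closed)
qed

section \<open>The normal closure of the bicyclic units\<close>

definition aug_units where "aug_units = (\<lambda>f. Phi f \<one>) ` Aug"

lemma subgroup_aug_units: "subgroup aug_units UZG"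
proof (rule group.subgroupI [OF group_units_ZG])
  show "aug_units \<subseteq> carrier UZG" "aug_units \<noteq> {}"
    unfolding aug_units_def using Phi_in_units H.one_closed Aug_zero by blast+
  show "inv\<^bsub>UZG\<^esub> a \<in> aug_units" if "a \<in> aug_units" for a
    using that Phi_one_inv Aug_neg unfolding aug_units_def by auto
  show "a \<otimes>\<^bsub>UZG\<^esub> b \<in> aug_units" if "a \<in> aug_units" "b \<in> aug_units" for a b
    using that Phi_one_mult Aug_add unfolding aug_units_def by auto
qed

lemma Phi_conjugate:
  assumes f0: "f0 \<in> Aug" and k0: "k0 \<in> H" and f: "f \<in> Aug"
  shows "gr_mult G (gr_mult G (Phi f0 k0) (Phi f \<one>)) (inv\<^bsub>UZG\<^esub> (Phi f0 k0)) = Phi (act k0 f) \<one>"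
proof -
  have k0c: "k0 \<in> carrier G"
    using k0 by (rule H.mem_carrier)
  have "gr_mult G (Phi f0 k0) (Phi f \<one>) = Phi (\<lambda>D. act (inv \<one>) f0 D + f D) (k0 \<otimes> \<one>)"
    using f by (intro Phi_mult k0 H.one_closed) (simp add: Aug_iff)
  also have "\<dots> = Phi (\<lambda>D. f0 D + f D) k0"
    using f0 k0c by (simp add: act_one Aug_iff)
  finally have "gr_mult G (gr_mult G (Phi f0 k0) (Phi f \<one>)) (inv\<^bsub>UZG\<^esub> (Phi f0 k0))
      = gr_mult G (Phi (\<lambda>D. f0 D + f D) k0) (Phi (\<lambda>D. - act k0 f0 D) (inv k0))"
    unfolding Phi_inv [OF f0 k0] by (rule arg_cong)
  also have "\<dots> = Phi (\<lambda>D. act (inv (inv k0)) (\<lambda>D. f0 D + f D) D + - act k0 f0 D) (k0 \<otimes> inv k0)"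
    using Aug_neg [OF act_in_Aug [OF k0 f0]]
    by (intro Phi_mult k0 H.m_inv_closed) (simp add: Aug_iff)
  also have "\<dots> = Phi (act k0 f) \<one>"
    using k0c by (simp add: act_add [OF k0])
  finally show ?thesis .
qed

lemma conjugate_bicyc_unit_in_aug_units:
  assumes "x \<in> Phi_image" "h \<in> H"
  shows "gr_mult G (gr_mult G x (bicyc_unit G (inv g) H h)) (inv\<^bsub>UZG\<^esub> x) \<in> aug_units"
proof -
  obtain f0 k0 where "f0 \<in> Aug" "k0 \<in> H" "x = Phi f0 k0"
    using assms(1) unfolding Phi_image_def by auto
  then show ?thesis
    unfolding aug_units_def bicyc_unit_eq_Phi [OF assms(2)]
    using Phi_conjugate coset_diff_in_Aug [OF assms(2)] act_in_Aug by auto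
qed

lemma aug_units_subset_Phi_image: "aug_units \<subseteq> Phi_image"
  unfolding aug_units_def Phi_image_def using H.one_closed by force

lemma normal_closure_eq_aug_units:
  "normal_closure (UZG\<lparr>carrier := Phi_image\<rparr>) (bicyc_unit G (inv g) H ` H) = aug_units"
proof -
  let ?K = "UZG\<lparr>carrier := Phi_image\<rparr>"
  let ?T = "{k \<otimes>\<^bsub>?K\<^esub> s \<otimes>\<^bsub>?K\<^esub> inv\<^bsub>?K\<^esub> k |k s. k \<in> carrier ?K \<and> s \<in> bicyc_unit G (inv g) H ` H}"
  have inv_K: "inv\<^bsub>?K\<^esub> x = inv\<^bsub>UZG\<^esub> x" if "x \<in> Phi_image" for x
    using group.m_inv_consistent [OF group_units_ZG subgroup_Phi_image that] .
  have T_aug: "?T \<subseteq> aug_units"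
    using conjugate_bicyc_unit_in_aug_units inv_K by auto
  have T_units: "?T \<subseteq> carrier UZG"
    using T_aug subgroup.subset [OF subgroup_aug_units] by blast
  have one: "gr_one G \<in> Phi_image" "inv\<^bsub>?K\<^esub> (gr_one G) = gr_one G"
    using subgroup.one_closed [OF subgroup_Phi_image] inv_K
      monoid.inv_one [OF group.is_monoid [OF group_units_ZG]] by simp_all
  have "Phi (coset_diff h) \<one> \<in> ?T" if h: "h \<in> H" for h
  proof -
    have "Phi (coset_diff h) \<one>
        = gr_one G \<otimes>\<^bsub>?K\<^esub> bicyc_unit G (inv g) H h \<otimes>\<^bsub>?K\<^esub> inv\<^bsub>?K\<^esub> (gr_one G)"
      using one bicyc_unit_eq_Phi [OF h] gr_mult_one_left [OF Phi_in_grp_ring]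
        gr_mult_one_right [OF Phi_in_grp_ring] by simp
    moreover have "gr_one G \<in> carrier ?K" "bicyc_unit G (inv g) H h \<in> bicyc_unit G (inv g) H ` H"
      using one h by simp_all
    ultimately show ?thesis
      by blast
  qed
  then have "aug_units \<subseteq> generate UZG ?T"
    unfolding aug_units_def
    using Phi_one_in_subgroup [OF group.generate_is_subgroup [OF group_units_ZG T_units]]
      generate.incl [of _ ?T UZG] by blast
  moreover have "generate UZG ?T \<subseteq> aug_units"
    by (rule group.generate_subgroup_incl [OF group_units_ZG T_aug subgroup_aug_units])
  moreover have "generate ?K ?T = generate UZG ?T"
    using T_aug aug_units_subset_Phi_image
    by (intro group.generate_consistent [OF group_units_ZG _ subgroup_Phi_image]) blast
  ultimately show ?thesis
    unfolding normal_closure_def by blast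
qed

lemma aug_units_iso_free_Abelian_group:
  "UZG\<lparr>carrier := aug_units\<rparr> \<cong> free_Abelian_group {..<card cosets - 1}"
proof -
  have "(\<lambda>f. Phi f \<one>) \<in> iso (aug_ideal cosets) (UZG\<lparr>carrier := aug_units\<rparr>)"
  proof (rule isoI)
    show "(\<lambda>f. Phi f \<one>) \<in> hom (aug_ideal cosets) (UZG\<lparr>carrier := aug_units\<rparr>)"
      by (rule homI) (simp_all add: aug_units_def aug_ideal_mult Phi_one_mult)
    have "inj_on (\<lambda>f. Phi f \<one>) Aug"
      by (rule inj_onI) (use Phi_inj [OF _ _ H.one_closed H.one_closed] in blast)
    then show "bij_betw (\<lambda>f. Phi f \<one>) Aug (carrier (UZG\<lparr>carrier := aug_units\<rparr>))"
      by (simp add: bij_betw_def aug_units_def)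
  qed
  then have "UZG\<lparr>carrier := aug_units\<rparr> \<cong> aug_ideal cosets"
    by (rule iso_sym_closed) (simp add: aug_ideal_mult Aug_add)
  also have "aug_ideal cosets \<cong> free_Abelian_group {..<card cosets - 1}"
    by (rule aug_ideal_iso_free_Abelian_group [OF finite_cosets isect_in_cosets])
  finally show ?thesis .
qed

end
theorem proposition6p3:
  fixes G :: "('a, 'b) monoid_scheme" and H :: "'a set" and g :: 'a
  assumes "group G" and "finite (carrier G)" and "subgroup H G" and "g \<in> carrier G"
  defines "C \<equiv> H \<inter> (inv\<^bsub>G\<^esub> g <#\<^bsub>G\<^esub> H #>\<^bsub>G\<^esub> g)"
  defines "Q \<equiv> left_cosets_in G H C"
  defines "K \<equiv> (units_ZG G)\<lparr>carrier := generate (units_ZG G)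
               (gr_basis G ` H \<union> psi G (inv\<^bsub>G\<^esub> g) H ` H)\<rparr>"
  shows "(K \<cong> semidirect_r (aug_ideal Q) (G\<lparr>carrier := H\<rparr>)
               (\<lambda>h f. coset_lmult G Q (inv\<^bsub>G\<^esub> h) f))
       \<and> (K\<lparr>carrier := normal_closure K (bicyc_unit G (inv\<^bsub>G\<^esub> g) H ` H)\<rparr>
           \<cong> free_Abelian_group {..< card Q - 1})"
proof -
  interpret bicyclic G H g
    using assms(1-4) by (simp add: bicyclic_def bicyclic_axioms_def finite_group_def finite_group_axioms_def)
  have Q: "Q = cosets"
    unfolding Q_def C_def cosets_def isect_def ..
  have K: "K = UZG\<lparr>carrier := Phi_image\<rparr>"
    unfolding K_def generators_def [symmetric] generate_eq_Phi_image ..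
  show ?thesis
    using Phi_image_iso_semidirect normal_closure_eq_aug_units aug_units_iso_free_Abelian_group
    unfolding K Q semidirect_def by simp
qed

end
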